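(* Let $\mathcal{A}\in\mathbb{C}^{m\times m\times p}$ be a fixed Hermitian T-product tensor, let $\mathcal{X}\in\mathbb{C}^{m\times m\times p}$ be a random Hermitian T-product tensor with $\mathbb{E}\mathcal{X}=\mathcal{O}$, and let $\beta$ be a Rademacher random variable independent of $\mathcal{X}$. Then $$\mathbb{E}\,\mathrm{Tr}\,e^{\mathcal{A}+\mathcal{X}}\leq\mathbb{E}\,\mathrm{Tr}\,e^{\mathcal{A}+2\beta\mathcal{X}}.$$
   Context: For $\mathcal{A}\in\mathbb{C}^{m\times n\times p}$ with frontal slices $A^{(1)},\dots,A^{(p)}$, $\mathrm{bcirc}(\mathcal{A})\in\mathbb{C}^{mp\times np}$ is the block circulant matrix whose $(r,s)$ block is $A^{(((r-s)\bmod p)+1)}$. The T-product $\mathcal{A}\star\mathcal{B}$ is the tensor with $\mathrm{bcirc}(\mathcal{A}\star\mathcal{B})=\mathrm{bcirc}(\mathcal{A})\mathrm{bcirc}(\mathcal{B})$; powers are T-product powers and $e^{\mathcal{A}}=\sum_{k\ge0}\mathcal{A}^k/k!$ with $\mathcal{A}^0$ the identity tensor (first frontal slice $I_m$, other slices zero). The conjugate transpose $\mathcal{A}^{\mathrm H}$ is obtained by conjugate-transposing every frontal slice and reversing the order of slices $2,\dots,p$; $\mathcal{A}$ is Hermitian if $\mathcal{A}^{\mathrm H}=\mathcal{A}$. $\mathrm{Tr}(\mathcal{A})$ denotes the trace of $\mathrm{bcirc}(\mathcal{A})$ (equivalently $p$ times the trace of the first frontal slice). $\mathcal{O}$ is the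 zero tensor; expectation is entrywise. *)

theory Defs
  imports "HOL-Probability.Probability" "HOL-Library.Complex_Order"
begin

text \<open>A third-order tensor in C^{m x n x p} is represented by its entry function:
  T i j k is the (i,j) entry of the (k+1)-th frontal slice (0-based indices
  i < m, j < n, k < p). Entries outside this range are irrelevant.\<close>

type_synonym tensor = "nat \<Rightarrow> nat \<Rightarrow> nat \<Rightarrow> complex"

definition cyc :: "nat \<Rightarrow> nat \<Rightarrow> nat \<Rightarrow> nat" where
  "cyc p k s = nat ((int k - int s) mod int p)"

text \<open>bcirc(A) for A in C^{m x n x p}: the (r,s) block is slice ((r - s) mod p);
  entry (a,b) with a = r*m + i, b = s*n + j.\<close>
definition bcirc :: "nat \<Rightarrow> nat \<Rightarrow> nat \<Rightarrow> tensor \<Rightarrow> nat \<Rightarrow> nat \<Rightarrow> complex" where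
  "bcirc m n p A a b = A (a mod m) (b mod n) (cyc p (a div m) (b div n))"

text \<open>T-product of A in C^{m x n x p} and B in C^{n x l x p}: the tensor whose
  bcirc is bcirc(A) bcirc(B), i.e. slice k is sum over s of A^((k-s) mod p) B^(s).\<close>
definition tprod :: "nat \<Rightarrow> nat \<Rightarrow> tensor \<Rightarrow> tensor \<Rightarrow> tensor" where
  "tprod n p A B = (\<lambda>i j k. \<Sum>s<p. \<Sum>l<n. A i l (cyc p k s) * B l j s)"

definition tid :: tensor where
  "tid = (\<lambda>i j k. if i = j \<and> k = 0 then 1 else 0)"

primrec tpow :: "nat \<Rightarrow> nat \<Rightarrow> tensor \<Rightarrow> nat \<Rightarrow> tensor" where
  "tpow m p A 0 = tid"
| "tpow m p A (Suc q) = tprod m p A (tpow m p A q)"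

definition texp :: "nat \<Rightarrow> nat \<Rightarrow> tensor \<Rightarrow> tensor" where
  "texp m p A = (\<lambda>i j k. \<Sum>q. tpow m p A q i j k / of_nat (fact q))"

text \<open>Conjugate transpose: conjugate-transpose each slice, reverse slices 2..p.\<close>
definition tconjT :: "nat \<Rightarrow> tensor \<Rightarrow> tensor" where
  "tconjT p A = (\<lambda>i j k. cnj (A j i (cyc p 0 k)))"

definition hermitian_tensor :: "nat \<Rightarrow> nat \<Rightarrow> tensor \<Rightarrow> bool" where
  "hermitian_tensor m p A \<longleftrightarrow> (\<forall>i<m. \<forall>j<m. \<forall>k<p. tconjT p A i j k = A i j k)"

definition tTr :: "nat \<Rightarrow> nat \<Rightarrow> tensor \<Rightarrow> complex" where
  "tTr m p A = (\<Sum>a<m*p. bcirc m m p A a a)"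

end

theory Submission
  imports Defs "Jordan_Normal_Form.Char_Poly"
begin

text \<open>
  Traces of T-product tensors are traces of their block circulant matrices, on which the T-product
  acts as matrix multiplication, so the argument is one about Hermitian matrices. Its tool is
  Klein's inequality Tr exp S \<ge> Tr exp T + Re Tr (exp T (S - T)): after diagonalizing S and T,
  the squared overlaps of the two eigenbases form a doubly stochastic matrix, and averaging the
  tangent-line bound exp \<lambda> \<ge> exp \<mu> (1 + \<lambda> - \<mu>) with these weights gives the inequality.
  Taking T = A + X and averaging over an independent copy X' of the centred X kills the linear
  term, so E Tr exp (A + X) \<le> E Tr exp (A + X - X'). Klein's inequality at T = A + X - X' in the
  two directions \<plusminus>(X + X') gives Tr exp (A + X - X') \<le> (Tr exp (A + 2X) + Tr exp (A - 2X')) / 2,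
  and since \<beta> is independent of X, the expectation of the right-hand side is E Tr exp (A + 2\<beta>X).
\<close>

section \<open>Matrices as entry functions\<close>

lemma sum_rotate3:
  "(\<Sum>a\<in>A. \<Sum>b\<in>B. \<Sum>c\<in>C. f a b c) = (\<Sum>c\<in>C. \<Sum>a\<in>A. \<Sum>b\<in>B. f a b c)"
proof -
  have "(\<Sum>a\<in>A. \<Sum>b\<in>B. \<Sum>c\<in>C. f a b c) = (\<Sum>a\<in>A. \<Sum>c\<in>C. \<Sum>b\<in>B. f a b c)"
    by (rule sum.cong[OF refl]) (rule sum.swap)
  also have "\<dots> = (\<Sum>c\<in>C. \<Sum>a\<in>A. \<Sum>b\<in>B. f a b c)" by (rule sum.swap)
  finally show ?thesis .
qed

lemma sum_swap4:
  "(\<Sum>a\<in>A. \<Sum>b\<in>B. \<Sum>c\<in>C. \<Sum>d\<in>D. f a b c d)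
   = (\<Sum>d\<in>D. \<Sum>c\<in>C. \<Sum>a\<in>A. \<Sum>b\<in>B. f a b c d)"
proof -
  have "(\<Sum>a\<in>A. \<Sum>b\<in>B. \<Sum>c\<in>C. \<Sum>d\<in>D. f a b c d)
      = (\<Sum>c\<in>C. \<Sum>a\<in>A. \<Sum>b\<in>B. \<Sum>d\<in>D. f a b c d)"
    by (rule sum_rotate3)
  also have "\<dots> = (\<Sum>c\<in>C. \<Sum>d\<in>D. \<Sum>a\<in>A. \<Sum>b\<in>B. f a b c d)"
    by (rule sum.cong[OF refl], rule sum_rotate3)
  also have "\<dots> = (\<Sum>d\<in>D. \<Sum>c\<in>C. \<Sum>a\<in>A. \<Sum>b\<in>B. f a b c d)" by (rule sum.swap)
  finally show ?thesis .
qed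

type_synonym cmat = "nat \<Rightarrow> nat \<Rightarrow> complex"

definition mat_mul :: "nat \<Rightarrow> cmat \<Rightarrow> cmat \<Rightarrow> cmat" where
  "mat_mul n P Q = (\<lambda>i j. \<Sum>k<n. P i k * Q k j)"

definition mat_adj :: "cmat \<Rightarrow> cmat" where
  "mat_adj P = (\<lambda>i j. cnj (P j i))"

definition mat_id :: cmat where
  "mat_id = (\<lambda>i j. if i = j then 1 else 0)"

definition unitary :: "nat \<Rightarrow> cmat \<Rightarrow> bool" where
  "unitary n U \<longleftrightarrow> (\<forall>i<n. \<forall>j<n.
     mat_mul n (mat_adj U) U i j = mat_id i j \<and> mat_mul n U (mat_adj U) i j = mat_id i j)"

definition hermitian :: "nat \<Rightarrow> cmat \<Rightarrow> bool" where
  "hermitian n P \<longleftrightarrow> (\<forall>i<n. \<forall>j<n. cnj (P j i) = P i j)"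

definition spectral_mat :: "nat \<Rightarrow> cmat \<Rightarrow> (nat \<Rightarrow> real) \<Rightarrow> cmat" where
  "spectral_mat n U d = (\<lambda>i j. \<Sum>k<n. U i k * of_real (d k) * cnj (U j k))"

lemma mat_mul_assoc: "mat_mul n (mat_mul n P Q) R = mat_mul n P (mat_mul n Q R)"
  unfolding mat_mul_def
  by (intro ext) (simp add: sum_distrib_left sum_distrib_right mult.assoc, rule sum.swap)

lemma mat_adj_mul: "mat_adj (mat_mul n P Q) = mat_mul n (mat_adj Q) (mat_adj P)"
  unfolding mat_adj_def mat_mul_def by (simp add: mult.commute)

lemma mat_mul_cong:
  "(\<And>k. k < n \<Longrightarrow> P i k = P' i k) \<Longrightarrow> (\<And>k. k < n \<Longrightarrow> Q k j = Q' k j) \<Longrightarrow>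
   mat_mul n P Q i j = mat_mul n P' Q' i j"
  unfolding mat_mul_def by (auto intro: sum.cong)

lemma mat_mul_id_left:
  assumes E: "\<forall>k<n. \<forall>l<n. E k l = mat_id k l" and i: "i < n"
  shows "mat_mul n E P i j = P i j"
proof -
  have "mat_mul n E P i j = (\<Sum>k<n. if i = k then P k j else 0)"
    unfolding mat_mul_def using E i by (intro sum.cong) (auto simp: mat_id_def)
  then show ?thesis using i by simp
qed

lemma mat_mul_id_right:
  assumes E: "\<forall>k<n. \<forall>l<n. E k l = mat_id k l" and j: "j < n"
  shows "mat_mul n P E i j = P i j"
proof -
  have "mat_mul n P E i j = (\<Sum>k<n. if k = j then P i k else 0)"
    unfolding mat_mul_def using E j by (intro sum.cong) (auto simp: mat_id_def)
  then show ?thesis using j by simp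
qed

lemma mat_mul_cancel_middle:
  assumes "\<forall>k<n. \<forall>l<n. mat_mul n Q R k l = mat_id k l"
  shows "mat_mul n (mat_mul n P Q) (mat_mul n R S) i j = mat_mul n P S i j"
proof -
  have "mat_mul n (mat_mul n P Q) (mat_mul n R S) i j = mat_mul n P (mat_mul n (mat_mul n Q R) S) i j"
    by (simp add: mat_mul_assoc)
  also have "\<dots> = mat_mul n P S i j"
    by (rule mat_mul_cong) (use assms in \<open>simp_all add: mat_mul_id_left\<close>)
  finally show ?thesis .
qed

lemma unitary_mul:
  assumes U: "unitary n U" and V: "unitary n V"
  shows "unitary n (mat_mul n U V)"
  unfolding unitary_def mat_adj_mul
proof (intro allI impI conjI)
  fix i j assume ij: "i < n" "j < n"
  have "mat_mul n (mat_mul n (mat_adj V) (mat_adj U)) (mat_mul n U V) i j = mat_mul n (mat_adj V) V i j"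
    using U by (intro mat_mul_cancel_middle) (simp add: unitary_def)
  then show "mat_mul n (mat_mul n (mat_adj V) (mat_adj U)) (mat_mul n U V) i j = mat_id i j"
    using V ij by (simp add: unitary_def)
  have "mat_mul n (mat_mul n U V) (mat_mul n (mat_adj V) (mat_adj U)) i j = mat_mul n U (mat_adj U) i j"
    using V by (intro mat_mul_cancel_middle) (simp add: unitary_def)
  then show "mat_mul n (mat_mul n U V) (mat_mul n (mat_adj V) (mat_adj U)) i j = mat_id i j"
    using U ij by (simp add: unitary_def)
qed

lemma unitary_if_hermitian_involution:
  assumes H: "hermitian n H" and HH: "\<forall>i<n. \<forall>j<n. mat_mul n H H i j = mat_id i j"
  shows "unitary n H"
proof -
  have "mat_mul n (mat_adj H) H i j = mat_mul n H H i j" "mat_mul n H (mat_adj H) i j = mat_mul n H H i j"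
    if "i < n" "j < n" for i j
    using H that by (auto intro!: mat_mul_cong simp: hermitian_def mat_adj_def)
  then show ?thesis using HH by (simp add: unitary_def)
qed

lemma spectral_mat_conj:
  assumes H: "hermitian n H" and j: "j < n"
  shows "mat_mul n (mat_mul n H (spectral_mat n K d)) H i j = spectral_mat n (mat_mul n H K) d i j"
proof -
  have "mat_mul n (mat_mul n H (spectral_mat n K d)) H i j
      = (\<Sum>b<n. \<Sum>a<n. \<Sum>k<n. H i a * K a k * of_real (d k) * (cnj (K b k) * H b j))"
    unfolding mat_mul_def spectral_mat_def by (simp add: sum_distrib_left sum_distrib_right mult.assoc)
  also have "\<dots> = (\<Sum>k<n. (\<Sum>a<n. H i a * K a k) * of_real (d k) * (\<Sum>b<n. cnj (K b k) * H b j))"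
    by (subst sum_rotate3) (simp add: sum_distrib_left sum_distrib_right)
  also have "\<dots> = spectral_mat n (mat_mul n H K) d i j"
    using H j unfolding spectral_mat_def mat_mul_def hermitian_def
    by (intro sum.cong refl arg_cong2[where f = "(*)"]) (auto simp: cnj_sum mult.commute intro!: sum.cong)
  finally show ?thesis .
qed

section \<open>Spectral theorem for Hermitian matrices\<close>

lemma unit_eigenvector_exists:
  fixes P :: cmat
  assumes "0 < n"
  shows "\<exists>e u. (\<Sum>i<n. cnj (u i) * u i) = 1 \<and> (\<forall>i<n. (\<Sum>j<n. P i j * u j) = e * u i)"
proof -
  define A where "A = mat n n (\<lambda>(i,j). P i j)"
  have A: "A \<in> carrier_mat n n" unfolding A_def by auto
  from char_poly_factorized[OF A] obtain es where
    cp: "char_poly A = (\<Prod>a\<leftarrow>es. [:- a, 1:])" and len: "length es = n" by auto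
  then obtain e where e: "e \<in> set es" using assms by (cases es) auto
  have "poly (char_poly A) e = 0" unfolding cp using e
    by (induction es) (auto simp: poly_prod_list)
  then have "eigenvalue A e" using eigenvalue_root_char_poly[OF A] by simp
  then have "eigenvector A (find_eigenvector A e) e" using find_eigenvector[OF A] by simp
  then obtain w where w: "w \<in> carrier_vec n" "w \<noteq> 0\<^sub>v n" "A *\<^sub>v w = e \<cdot>\<^sub>v w"
    unfolding eigenvector_def using A by auto
  define v where "v i = w $ i" for i
  have ev: "(\<Sum>j<n. P i j * v j) = e * v i" if "i < n" for i
  proof -
    have "(A *\<^sub>v w) $ i = (e \<cdot>\<^sub>v w) $ i" using w(3) by simp
    then show ?thesis
      using that w(1) unfolding A_def v_def by (simp add: scalar_prod_def row_def atLeast0LessThan)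
  qed
  obtain i0 where i0: "i0 < n" "v i0 \<noteq> 0"
    using w(1,2) unfolding v_def by (metis eq_vecI carrier_vecD index_zero_vec)
  define r where "r = sqrt (\<Sum>i<n. (cmod (v i))\<^sup>2)"
  have pos: "(\<Sum>i<n. (cmod (v i))\<^sup>2) > 0"
    by (rule sum_pos2[where i = i0]) (use i0 in auto)
  then have r: "r > 0" "r\<^sup>2 = (\<Sum>i<n. (cmod (v i))\<^sup>2)" unfolding r_def by simp_all
  define u where "u i = v i / of_real r" for i
  have nv: "cnj (v i) * v i = of_real ((cmod (v i))\<^sup>2)" for i
    using complex_norm_square[of "v i"] by (simp add: mult.commute)
  have "cnj (u i) * u i = cnj (v i) * v i / of_real (r\<^sup>2)" for i
    unfolding u_def by (simp add: power2_eq_square)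
  then have "(\<Sum>i<n. cnj (u i) * u i) = (\<Sum>i<n. of_real ((cmod (v i))\<^sup>2)) / of_real (r\<^sup>2)"
    by (simp only: nv sum_divide_distrib)
  also have "\<dots> = of_real ((\<Sum>i<n. (cmod (v i))\<^sup>2) / r\<^sup>2)" by simp
  finally have "(\<Sum>i<n. cnj (u i) * u i) = 1" using r pos by simp
  moreover have "(\<Sum>j<n. P i j * u j) = e * u i" if "i < n" for i
    using ev[OF that] unfolding u_def by (simp add: sum_divide_distrib[symmetric] mult.assoc)
  ultimately show ?thesis by blast
qed

lemma involution_rank_one:
  fixes w y :: "nat \<Rightarrow> complex"
  assumes "i < n" "j < n" "(\<Sum>k<n. y k * w k) = 2"
  shows "mat_mul n (\<lambda>i j. mat_id i j - w i * y j) (\<lambda>i j. mat_id i j - w i * y j) i j = mat_id i j"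
proof -
  have id: "\<forall>k<n. \<forall>l<n. mat_id k l = mat_id k l" by simp
  have "mat_mul n (\<lambda>i j. mat_id i j - w i * y j) (\<lambda>i j. mat_id i j - w i * y j) i j
     = mat_mul n mat_id mat_id i j - mat_mul n mat_id (\<lambda>k j. w k * y j) i j
       - mat_mul n (\<lambda>i k. w i * y k) mat_id i j + w i * (\<Sum>k<n. y k * w k) * y j"
    unfolding mat_mul_def
    by (simp add: algebra_simps sum.distrib sum_subtractf sum_distrib_left sum_distrib_right)
  then show ?thesis
    using assms by (simp add: mat_mul_id_left[OF id] mat_mul_id_right[OF id])
qed

lemma householder_reflection:
  fixes u :: "nat \<Rightarrow> complex"
  assumes n: "0 < n" and u: "(\<Sum>i<n. cnj (u i) * u i) = 1"
  shows "\<exists>H c. hermitian n H \<and> (\<forall>i<n. \<forall>j<n. mat_mul n H H i j = mat_id i j)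
           \<and> (\<forall>k<n. H k 0 = c * u k)"
proof -
  define a where "a = cmod (u 0)"
  define ph where "ph = (if u 0 = 0 then 1 else u 0 / of_real a)"
  have u0: "u 0 = of_real a * ph"
    by (cases "u 0 = 0") (auto simp: ph_def a_def)
  have ph: "cnj ph * ph = 1"
  proof (cases "u 0 = 0")
    case False
    then have "a \<noteq> 0" unfolding a_def by simp
    have "cnj (u 0) * u 0 = of_real (a * a)"
      unfolding a_def using complex_norm_square[of "u 0"] by (simp add: power2_eq_square mult.commute)
    then show ?thesis using False \<open>a \<noteq> 0\<close> unfolding ph_def by (simp add: field_simps)
  qed (simp add: ph_def)
  \<comment> \<open>the phase of u 0 makes the reflection vector w = u + ph e0 satisfy |w|^2 = 2 + 2 |u 0| > 0\<close>
  define w where "w k = u k + ph * mat_id k 0" for k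
  define t where "t = 2 * (1 + a)"
  have t: "t > 0" unfolding t_def a_def by (simp add: add_pos_nonneg)
  obtain n' where n': "n = Suc n'" using n by (cases n) auto
  have "(\<Sum>k<n. cnj (w k) * w k) = cnj (w 0) * w 0 + (\<Sum>k<n'. cnj (u (Suc k)) * u (Suc k))"
    unfolding n' sum.lessThan_Suc_shift by (simp add: w_def mat_id_def)
  moreover have "1 = cnj (u 0) * u 0 + (\<Sum>k<n'. cnj (u (Suc k)) * u (Suc k))"
    using u unfolding n' sum.lessThan_Suc_shift by simp
  moreover have "cnj (w 0) * w 0 = cnj (u 0) * u 0 + 2 * of_real a + 1"
    unfolding w_def u0 mat_id_def using ph by (simp add: algebra_simps)
  ultimately have w: "(\<Sum>k<n. cnj (w k) * w k) = of_real t"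
    unfolding t_def by (simp add: algebra_simps)
  define y where "y k = 2 * cnj (w k) / of_real t" for k
  define H where "H i j = mat_id i j - w i * y j" for i j
  have "hermitian n H"
    unfolding hermitian_def H_def y_def mat_id_def by (auto simp: mult.commute)
  moreover have "(\<Sum>k<n. y k * w k) = 2 * (\<Sum>k<n. cnj (w k) * w k) / of_real t"
    unfolding y_def by (simp add: sum_distrib_left sum_divide_distrib mult.assoc)
  then have "(\<Sum>k<n. y k * w k) = 2" using w t by simp
  then have "\<forall>i<n. \<forall>j<n. mat_mul n H H i j = mat_id i j"
    unfolding H_def[abs_def] using involution_rank_one by blast
  moreover have "\<forall>k<n. H k 0 = - cnj ph * u k"
  proof (intro allI impI)
    fix k
    have "cnj (w 0) = of_real (1 + a) * cnj ph"
      unfolding w_def u0 by (simp add: mat_id_def algebra_simps)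
    then have "y 0 = of_real t * cnj ph / of_real t"
      unfolding y_def t_def by (simp only: mult.assoc of_real_mult of_real_numeral)
    also have "\<dots> = cnj ph" using t by simp
    finally show "H k 0 = - cnj ph * u k"
      unfolding H_def w_def using ph by (simp add: algebra_simps mat_id_def)
  qed
  ultimately show ?thesis by blast
qed

definition mat_extend :: "cmat \<Rightarrow> cmat" where
  "mat_extend U = (\<lambda>i j. if i = 0 \<or> j = 0 then mat_id i j else U (i - 1) (j - 1))"

lemma mat_extend_simps [simp]:
  "mat_extend U 0 j = mat_id 0 j" "mat_extend U i 0 = mat_id i 0"
  "mat_extend U (Suc i) (Suc j) = U i j"
  by (simp_all add: mat_extend_def)

lemma unitary_mat_extend:
  assumes "unitary n U"
  shows "unitary (Suc n) (mat_extend U)"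
  unfolding unitary_def
proof (intro allI impI conjI)
  fix i j assume "i < Suc n" "j < Suc n"
  then show "mat_mul (Suc n) (mat_adj (mat_extend U)) (mat_extend U) i j = mat_id i j"
    and "mat_mul (Suc n) (mat_extend U) (mat_adj (mat_extend U)) i j = mat_id i j"
    using assms unfolding mat_mul_def mat_adj_def unitary_def
    by (cases i; cases j; simp add: sum.lessThan_Suc_shift mat_id_def del: sum.lessThan_Suc)+
qed

lemma spectral_mat_extend:
  "spectral_mat (Suc n) (mat_extend U) (case_nat e d) 0 j = of_real e * mat_id 0 j"
  "spectral_mat (Suc n) (mat_extend U) (case_nat e d) i 0 = of_real e * mat_id i 0"
  "spectral_mat (Suc n) (mat_extend U) (case_nat e d) (Suc i) (Suc j) = spectral_mat n U d i j"
  unfolding spectral_mat_def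
  by (simp_all add: sum.lessThan_Suc_shift mat_id_def del: sum.lessThan_Suc)

lemma hermitian_conj:
  assumes "hermitian n H" "hermitian n P"
  shows "hermitian n (mat_mul n (mat_mul n H P) H)"
proof -
  have adj: "mat_adj Q i j = Q i j" if "hermitian n Q" "i < n" "j < n" for Q i j
    using that by (simp add: hermitian_def mat_adj_def)
  have "mat_adj (mat_mul n (mat_mul n H P) H) i j = mat_mul n (mat_mul n H P) H i j"
    if "i < n" "j < n" for i j
  proof -
    have "mat_adj (mat_mul n (mat_mul n H P) H) i j
        = mat_mul n (mat_adj H) (mat_mul n (mat_adj P) (mat_adj H)) i j"
      by (simp add: mat_adj_mul)
    also have "\<dots> = mat_mul n H (mat_mul n P H) i j"
      using assms that by (auto intro!: mat_mul_cong simp: adj)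
    finally show ?thesis by (simp add: mat_mul_assoc)
  qed
  then show ?thesis by (simp add: hermitian_def mat_adj_def)
qed

lemma householder_deflation:
  fixes P :: cmat
  assumes P: "hermitian (Suc n) P"
  shows "\<exists>H e. hermitian (Suc n) H \<and> (\<forall>i<Suc n. \<forall>j<Suc n. mat_mul (Suc n) H H i j = mat_id i j)
    \<and> (\<forall>i<Suc n. mat_mul (Suc n) (mat_mul (Suc n) H P) H i 0 = of_real e * mat_id i 0
               \<and> mat_mul (Suc n) (mat_mul (Suc n) H P) H 0 i = of_real e * mat_id 0 i)"
proof -
  define N where "N = Suc n"
  obtain e u where u: "(\<Sum>i<N. cnj (u i) * u i) = 1" and eu: "\<And>i. i < N \<Longrightarrow> (\<Sum>j<N. P i j * u j) = e * u i"
    using unit_eigenvector_exists[of N P] N_def by auto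
  obtain H c where H: "hermitian N H" and HH: "\<forall>i<N. \<forall>j<N. mat_mul N H H i j = mat_id i j"
    and Hu: "\<forall>k<N. H k 0 = c * u k"
    using householder_reflection[OF _ u] N_def by auto
  define B where "B = mat_mul N (mat_mul N H P) H"
  have B_col: "B i 0 = e * mat_id i 0" if "i < N" for i
  proof -
    have "mat_mul N P H l 0 = e * H l 0" if "l < N" for l
      using Hu eu[OF that] that unfolding mat_mul_def
      by (simp add: sum_distrib_left[symmetric] mult.left_commute)
    then have "B i 0 = mat_mul N H (\<lambda>l j. e * H l j) i 0"
      unfolding B_def mat_mul_assoc by (intro mat_mul_cong) auto
    also have "\<dots> = e * mat_mul N H H i 0" unfolding mat_mul_def by (simp add: sum_distrib_left mult_ac)
    finally show ?thesis using HH that N_def by simp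
  qed
  have B: "hermitian N B" unfolding B_def using H P N_def by (simp add: hermitian_conj)
  have "cnj (B 0 0) = B 0 0" using B unfolding hermitian_def N_def by blast
  then have e_real: "cnj e = e" using B_col[of 0] N_def by (simp add: mat_id_def)
  then have e: "e = of_real (Re e)" using arg_cong[OF e_real, of Im] by (simp add: complex_eq_iff)
  have B_row: "B 0 j = e * mat_id 0 j" if "j < N" for j
  proof -
    have "B 0 j = cnj (B j 0)" using B that unfolding hermitian_def N_def by simp
    then show ?thesis using B_col[OF that] e_real by (simp add: mat_id_def)
  qed
  show ?thesis
    using H HH B_col B_row e unfolding B_def N_def by (intro exI[of _ H] exI[of _ "Re e"]) auto
qed

theorem spectral_theorem:
  fixes P :: cmat
  assumes "hermitian n P"
  shows "\<exists>U d. unitary n U \<and> (\<forall>i<n. \<forall>j<n. P i j = spectral_mat n U d i j)"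
  using assms
proof (induction n arbitrary: P)
  case 0
  show ?case by (auto simp: unitary_def)
next
  case (Suc n P)
  obtain H e where H: "hermitian (Suc n) H" and HH: "\<forall>i<Suc n. \<forall>j<Suc n. mat_mul (Suc n) H H i j = mat_id i j"
    and B_edge: "\<forall>i<Suc n. mat_mul (Suc n) (mat_mul (Suc n) H P) H i 0 = of_real e * mat_id i 0
               \<and> mat_mul (Suc n) (mat_mul (Suc n) H P) H 0 i = of_real e * mat_id 0 i"
    using householder_deflation[OF Suc.prems] by blast
  define B where "B = mat_mul (Suc n) (mat_mul (Suc n) H P) H"
  have "hermitian n (\<lambda>i j. B (Suc i) (Suc j))"
    using hermitian_conj[OF H Suc.prems] unfolding B_def hermitian_def by simp
  from Suc.IH[OF this] obtain U d where U: "unitary n U"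
    and BU: "\<forall>i<n. \<forall>j<n. B (Suc i) (Suc j) = spectral_mat n U d i j" by auto
  have B_spectral: "B i j = spectral_mat (Suc n) (mat_extend U) (case_nat e d) i j"
    if "i < Suc n" "j < Suc n" for i j
    using that B_edge BU unfolding B_def[symmetric]
    by (cases i; cases j) (simp_all add: spectral_mat_extend)
  have "P i j = spectral_mat (Suc n) (mat_mul (Suc n) H (mat_extend U)) (case_nat e d) i j"
    if "i < Suc n" "j < Suc n" for i j
  proof -
    have "P i j = mat_mul (Suc n) (mat_mul (Suc n) (mat_mul (Suc n) H H) P) (mat_mul (Suc n) H H) i j"
      using HH that by (simp add: mat_mul_id_left mat_mul_id_right)
    also have "\<dots> = mat_mul (Suc n) (mat_mul (Suc n) H B) H i j"
      unfolding B_def by (simp add: mat_mul_assoc)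
    also have "\<dots> = mat_mul (Suc n) (mat_mul (Suc n) H (spectral_mat (Suc n) (mat_extend U) (case_nat e d))) H i j"
      using B_spectral by (intro mat_mul_cong) auto
    also have "\<dots> = spectral_mat (Suc n) (mat_mul (Suc n) H (mat_extend U)) (case_nat e d) i j"
      using H that(2) by (rule spectral_mat_conj)
    finally show ?thesis .
  qed
  moreover have "unitary (Suc n) (mat_mul (Suc n) H (mat_extend U))"
    using unitary_mul[OF unitary_if_hermitian_involution[OF H HH] unitary_mat_extend[OF U]] .
  ultimately show ?case by blast
qed

section \<open>Matrix exponential and Klein's inequality\<close>

primrec mat_pow :: "nat \<Rightarrow> cmat \<Rightarrow> nat \<Rightarrow> cmat" where
  "mat_pow n P 0 = mat_id"
| "mat_pow n P (Suc q) = mat_mul n P (mat_pow n P q)"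

definition mat_exp :: "nat \<Rightarrow> cmat \<Rightarrow> cmat" where
  "mat_exp n P = (\<lambda>i j. \<Sum>q. mat_pow n P q i j / of_nat (fact q))"

definition mat_trace :: "nat \<Rightarrow> cmat \<Rightarrow> complex" where
  "mat_trace n P = (\<Sum>i<n. P i i)"

lemma hermitian_add:
  "hermitian n P \<Longrightarrow> hermitian n Q \<Longrightarrow> hermitian n (\<lambda>i j. P i j + Q i j)"
  by (simp add: hermitian_def)

lemma unitary_adj: "unitary n U \<Longrightarrow> unitary n (mat_adj U)"
  by (simp add: unitary_def mat_adj_def)

lemma unitary_row_norm:
  assumes "unitary n W" "i < n"
  shows "(\<Sum>k<n. (cmod (W i k))\<^sup>2) = 1"
proof -
  have "(\<Sum>k<n. of_real ((cmod (W i k))\<^sup>2)) = mat_mul n W (mat_adj W) i i"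
    unfolding mat_mul_def mat_adj_def by (simp flip: complex_norm_square)
  also have "\<dots> = 1" using assms by (simp add: unitary_def mat_id_def)
  finally show ?thesis by (metis of_real_1 of_real_eq_iff of_real_sum)
qed

lemma unitary_col_norm:
  assumes "unitary n W" "k < n"
  shows "(\<Sum>i<n. (cmod (W i k))\<^sup>2) = 1"
  using unitary_row_norm[OF unitary_adj[OF assms(1)] assms(2)] by (simp add: mat_adj_def)

lemma sum_mult_id:
  assumes "\<forall>k<n. \<forall>l<n. E k l = mat_id k l"
  shows "(\<Sum>k<n. \<Sum>l<n. g k l * E k l) = (\<Sum>k<n. g k k)"
proof (rule sum.cong[OF refl])
  fix k assume k: "k \<in> {..<n}"
  have "(\<Sum>l<n. g k l * E k l) = (\<Sum>l<n. if k = l then g k l else 0)"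
    using assms k by (intro sum.cong) (auto simp: mat_id_def)
  then show "(\<Sum>l<n. g k l * E k l) = g k k" using k by simp
qed

lemma spectral_mat_mul:
  assumes "unitary n U"
  shows "mat_mul n (spectral_mat n U x) (spectral_mat n U y) i j = spectral_mat n U (\<lambda>k. x k * y k) i j"
proof -
  have "mat_mul n (spectral_mat n U x) (spectral_mat n U y) i j
      = (\<Sum>c<n. \<Sum>k<n. \<Sum>l<n. U i k * of_real (x k) * cnj (U c k) * (U c l * of_real (y l) * cnj (U j l)))"
    unfolding mat_mul_def spectral_mat_def by (simp add: sum_product)
  also have "\<dots> = (\<Sum>k<n. \<Sum>l<n. \<Sum>c<n. U i k * of_real (x k) * cnj (U c k) * (U c l * of_real (y l) * cnj (U j l)))"
    by (subst sum_rotate3, subst sum_rotate3) (rule refl)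
  also have "\<dots> = (\<Sum>k<n. \<Sum>l<n. U i k * of_real (x k) * of_real (y l) * cnj (U j l) * mat_mul n (mat_adj U) U k l)"
    unfolding mat_mul_def mat_adj_def by (simp add: sum_distrib_left mult_ac)
  also have "\<dots> = spectral_mat n U (\<lambda>k. x k * y k) i j"
    unfolding spectral_mat_def using assms by (subst sum_mult_id) (auto simp: unitary_def mult_ac)
  finally show ?thesis .
qed

lemma mat_id_spectral:
  assumes "unitary n U" "i < n" "j < n"
  shows "mat_id i j = spectral_mat n U (\<lambda>_. 1) i j"
  using assms by (simp add: unitary_def spectral_mat_def mat_mul_def mat_adj_def)

lemma mat_pow_spectral:
  assumes U: "unitary n U" and P: "\<forall>i<n. \<forall>j<n. P i j = spectral_mat n U d i j"
    and "i < n" "j < n"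
  shows "mat_pow n P q i j = spectral_mat n U (\<lambda>k. d k ^ q) i j"
  using assms(3,4)
proof (induction q arbitrary: i j)
  case 0
  have "mat_id i j = spectral_mat n U (\<lambda>_. 1) i j" using U 0 by (rule mat_id_spectral)
  then show ?case by simp
next
  case (Suc q)
  have "mat_pow n P (Suc q) i j = mat_mul n (spectral_mat n U d) (spectral_mat n U (\<lambda>k. d k ^ q)) i j"
    unfolding mat_pow.simps using Suc P by (intro mat_mul_cong) auto
  also have "\<dots> = spectral_mat n U (\<lambda>k. d k ^ Suc q) i j"
    by (simp add: spectral_mat_mul[OF U])
  finally show ?case .
qed

lemma sums_exp_of_real: "(\<lambda>q. of_real (x ^ q) / of_nat (fact q) :: complex) sums of_real (exp x)"
proof -
  have "(\<lambda>q. of_real (x ^ q /\<^sub>R fact q) :: complex) sums of_real (exp x)"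
    by (intro sums_of_real exp_converges)
  then show ?thesis by (simp add: divide_inverse mult.commute)
qed

lemma mat_exp_spectral:
  assumes U: "unitary n U" and P: "\<forall>i<n. \<forall>j<n. P i j = spectral_mat n U d i j"
    and ij: "i < n" "j < n"
  shows "mat_exp n P i j = spectral_mat n U (\<lambda>k. exp (d k)) i j"
proof -
  have "(\<lambda>q. \<Sum>k<n. U i k * cnj (U j k) * (of_real (d k ^ q) / of_nat (fact q)))
        sums (\<Sum>k<n. U i k * cnj (U j k) * of_real (exp (d k)))"
    by (intro sums_sum sums_mult sums_exp_of_real)
  then have "(\<lambda>q. mat_pow n P q i j / of_nat (fact q)) sums spectral_mat n U (\<lambda>k. exp (d k)) i j"
    using mat_pow_spectral[OF U P ij] unfolding spectral_mat_def
    by (simp add: sum_divide_distrib mult_ac)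
  then show ?thesis unfolding mat_exp_def by (rule sums_unique[symmetric])
qed

lemma mat_trace_spectral:
  assumes "unitary n U"
  shows "mat_trace n (spectral_mat n U x) = of_real (\<Sum>k<n. x k)"
proof -
  have "mat_trace n (spectral_mat n U x) = (\<Sum>i<n. \<Sum>k<n. of_real (x k) * (cnj (U i k) * U i k))"
    unfolding mat_trace_def spectral_mat_def by (simp add: mult_ac)
  also have "\<dots> = (\<Sum>k<n. of_real (x k) * mat_mul n (mat_adj U) U k k)"
    unfolding mat_mul_def mat_adj_def by (subst sum.swap) (simp add: sum_distrib_left)
  also have "\<dots> = (\<Sum>k<n. of_real (x k))"
    using assms by (intro sum.cong) (auto simp: unitary_def mat_id_def)
  finally show ?thesis by simp
qed

lemma mat_trace_exp_spectral:
  assumes U: "unitary n U" and P: "\<forall>i<n. \<forall>j<n. P i j = spectral_mat n U d i j"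
  shows "mat_trace n (mat_exp n P) = of_real (\<Sum>k<n. exp (d k))"
  using mat_exp_spectral[OF U P] mat_trace_spectral[OF U, of "\<lambda>k. exp (d k)"]
  unfolding mat_trace_def by simp

lemma mat_trace_exp_nonneg:
  assumes "hermitian n P"
  shows "0 \<le> mat_trace n (mat_exp n P)"
proof -
  obtain U d where U: "unitary n U" and P: "\<forall>i<n. \<forall>j<n. P i j = spectral_mat n U d i j"
    using spectral_theorem[OF assms] by blast
  show ?thesis
    using mat_trace_exp_spectral[OF U P] by (simp add: less_eq_complex_def sum_nonneg)
qed

lemma mat_trace_spectral_mul:
  "mat_trace n (mat_mul n (spectral_mat n U x) (spectral_mat n V y))
   = of_real (\<Sum>i<n. \<Sum>k<n. x k * y i * (cmod (mat_mul n (mat_adj V) U i k))\<^sup>2)"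
proof -
  define W where "W i k = (\<Sum>a<n. cnj (V a i) * U a k)" for i k
  have W_norm: "W i k * cnj (W i k) = of_real ((cmod (mat_mul n (mat_adj V) U i k))\<^sup>2)" for i k
    unfolding W_def mat_mul_def mat_adj_def by (rule complex_norm_square[symmetric])
  have "mat_trace n (mat_mul n (spectral_mat n U x) (spectral_mat n V y))
      = (\<Sum>a<n. \<Sum>b<n. \<Sum>k<n. \<Sum>i<n. of_real (x k * y i) * ((cnj (V a i) * U a k) * cnj (cnj (V b i) * U b k)))"
    unfolding mat_trace_def mat_mul_def spectral_mat_def by (simp add: sum_product mult_ac)
  also have "\<dots> = (\<Sum>i<n. \<Sum>k<n. \<Sum>a<n. \<Sum>b<n.
      of_real (x k * y i) * ((cnj (V a i) * U a k) * cnj (cnj (V b i) * U b k)))"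
    by (rule sum_swap4)
  also have "\<dots> = (\<Sum>i<n. \<Sum>k<n. of_real (x k * y i) * (W i k * cnj (W i k)))"
    unfolding W_def by (simp only: cnj_sum sum_product) (simp only: sum_distrib_left)
  also have "\<dots> = of_real (\<Sum>i<n. \<Sum>k<n. x k * y i * (cmod (mat_mul n (mat_adj V) U i k))\<^sup>2)"
    unfolding W_norm by simp
  finally show ?thesis .
qed

lemma tangent_exp_doubly_stochastic:
  fixes q :: "nat \<Rightarrow> nat \<Rightarrow> real" and lam mu :: "nat \<Rightarrow> real"
  assumes q: "\<And>i k. 0 \<le> q i k"
    and row: "\<And>i. i < n \<Longrightarrow> (\<Sum>k<n. q i k) = 1"
    and col: "\<And>k. k < n \<Longrightarrow> (\<Sum>i<n. q i k) = 1"
  shows "(\<Sum>i<n. \<Sum>k<n. exp (mu k) * lam i * q i k) - (\<Sum>k<n. exp (mu k) * mu k)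
       \<le> (\<Sum>i<n. exp (lam i)) - (\<Sum>k<n. exp (mu k))"
proof -
  have weighted: "(\<Sum>k<n. f k) = (\<Sum>i<n. \<Sum>k<n. q i k * f k)" for f
    using col by (subst sum.swap) (simp add: sum_distrib_right[symmetric])
  have rows: "(\<Sum>i<n. \<Sum>k<n. q i k * exp (lam i)) = (\<Sum>i<n. exp (lam i))"
    using row by (simp add: sum_distrib_right[symmetric])
  have "(\<Sum>i<n. \<Sum>k<n. exp (mu k) * lam i * q i k) - (\<Sum>k<n. exp (mu k) * mu k)
      = (\<Sum>i<n. \<Sum>k<n. q i k * (exp (mu k) * (lam i - mu k)))"
    unfolding weighted[of "\<lambda>k. exp (mu k) * mu k"]
    by (simp add: sum_subtractf[symmetric] algebra_simps)
  also have "\<dots> \<le> (\<Sum>i<n. \<Sum>k<n. q i k * (exp (lam i) - exp (mu k)))"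
    by (intro sum_mono mult_left_mono q) (use exp_ge_add_one_self[of "lam i - mu k" for i k] in
        \<open>simp add: exp_diff field_simps\<close>)
  also have "\<dots> = (\<Sum>i<n. exp (lam i)) - (\<Sum>k<n. exp (mu k))"
    unfolding weighted[of "\<lambda>k. exp (mu k)"] rows[symmetric] by (simp add: right_diff_distrib sum_subtractf)
  finally show ?thesis .
qed

theorem klein_inequality:
  assumes P: "hermitian n P" and Q: "hermitian n Q"
  shows "Re (mat_trace n (mat_exp n P)) + Re (mat_trace n (mat_mul n (mat_exp n P) Q))
       \<le> Re (mat_trace n (mat_exp n (\<lambda>i j. P i j + Q i j)))"
proof -
  obtain U mu where U: "unitary n U" and PU: "\<forall>i<n. \<forall>j<n. P i j = spectral_mat n U mu i j"
    using spectral_theorem[OF P] by blast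
  obtain V lam where V: "unitary n V"
    and PQV: "\<forall>i<n. \<forall>j<n. P i j + Q i j = spectral_mat n V lam i j"
    using spectral_theorem[OF hermitian_add[OF P Q]] by blast
  define E where "E = spectral_mat n U (\<lambda>k. exp (mu k))"
  define q where "q i k = (cmod (mat_mul n (mat_adj V) U i k))\<^sup>2" for i k
  have W: "unitary n (mat_mul n (mat_adj V) U)" by (intro unitary_mul unitary_adj U V)
  have Q_spectral: "Q i j = spectral_mat n V lam i j - spectral_mat n U mu i j" if "i < n" "j < n" for i j
    using PU PQV that by (metis add_diff_cancel_left')
  have "mat_trace n (mat_mul n (mat_exp n P) Q)
      = (\<Sum>i<n. \<Sum>k<n. E i k * (spectral_mat n V lam k i - spectral_mat n U mu k i))"
    unfolding mat_trace_def mat_mul_def E_def using mat_exp_spectral[OF U PU] Q_spectral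
    by (intro sum.cong refl) auto
  also have "\<dots> = mat_trace n (mat_mul n E (spectral_mat n V lam)) - mat_trace n (mat_mul n E (spectral_mat n U mu))"
    unfolding mat_trace_def mat_mul_def by (simp add: right_diff_distrib sum_subtractf)
  finally have trQ: "mat_trace n (mat_mul n (mat_exp n P) Q)
      = mat_trace n (mat_mul n E (spectral_mat n V lam)) - mat_trace n (mat_mul n E (spectral_mat n U mu))" .
  have "mat_trace n (mat_mul n E (spectral_mat n U mu)) = of_real (\<Sum>k<n. exp (mu k) * mu k)"
    unfolding E_def mat_trace_def
    using spectral_mat_mul[OF U] mat_trace_spectral[OF U, of "\<lambda>k. exp (mu k) * mu k"] by (simp add: mat_trace_def)
  moreover have "mat_trace n (mat_mul n E (spectral_mat n V lam)) = of_real (\<Sum>i<n. \<Sum>k<n. exp (mu k) * lam i * q i k)"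
    unfolding E_def q_def by (simp add: mat_trace_spectral_mul mult.assoc)
  moreover have "Re (mat_trace n (mat_exp n (\<lambda>i j. P i j + Q i j))) = (\<Sum>i<n. exp (lam i))"
    using mat_trace_exp_spectral[OF V PQV] by simp
  moreover have "(\<Sum>i<n. \<Sum>k<n. exp (mu k) * lam i * q i k) - (\<Sum>k<n. exp (mu k) * mu k)
      \<le> (\<Sum>i<n. exp (lam i)) - (\<Sum>k<n. exp (mu k))"
    by (rule tangent_exp_doubly_stochastic) (use W in \<open>simp_all add: q_def unitary_row_norm unitary_col_norm\<close>)
  ultimately show ?thesis using mat_trace_exp_spectral[OF U PU] trQ by simp
qed

section \<open>T-product tensors through their block circulant matrices\<close>

definition tadd :: "tensor \<Rightarrow> tensor \<Rightarrow> tensor" where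
  "tadd S T = (\<lambda>i j k. S i j k + T i j k)"

definition tscale :: "real \<Rightarrow> tensor \<Rightarrow> tensor" where
  "tscale c T = (\<lambda>i j k. of_real c * T i j k)"

definition tr_exp :: "nat \<Rightarrow> nat \<Rightarrow> tensor \<Rightarrow> real" where
  "tr_exp m p T = Re (tTr m p (texp m p T))"

lemma int_cyc: "0 < p \<Longrightarrow> int (cyc p k s) = (int k - int s) mod int p"
  unfolding cyc_def by simp

lemma cyc_less: "0 < p \<Longrightarrow> cyc p k s < p"
  unfolding cyc_def by (simp add: nat_less_iff)

lemma cyc_cyc: "0 < p \<Longrightarrow> cyc p (cyc p r t) (cyc p s t) = cyc p r s"
proof -
  assume p: "0 < p"
  have "int (cyc p (cyc p r t) (cyc p s t)) = ((int r - int t) mod int p - (int s - int t) mod int p) mod int p"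
    using p by (simp add: int_cyc)
  also have "\<dots> = ((int r - int t) - (int s - int t)) mod int p" by (simp add: mod_diff_eq)
  also have "\<dots> = int (cyc p r s)" using p by (simp add: int_cyc)
  finally show ?thesis by simp
qed

lemma cyc_0_cyc: "0 < p \<Longrightarrow> cyc p 0 (cyc p r t) = cyc p t r"
proof -
  assume p: "0 < p"
  have "int (cyc p 0 (cyc p r t)) = (0 - (int r - int t) mod int p) mod int p"
    using p by (simp add: int_cyc)
  also have "\<dots> = (0 - (int r - int t)) mod int p" by (rule mod_diff_right_eq)
  also have "\<dots> = int (cyc p t r)" using p by (simp add: int_cyc)
  finally show ?thesis by simp
qed

lemma cyc_mod_add: "0 < p \<Longrightarrow> s < p \<Longrightarrow> cyc p ((s + t) mod p) t = s"
proof -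
  assume p: "0 < p" "s < p"
  have "int (cyc p ((s + t) mod p) t) = (int ((s + t) mod p) - int t) mod int p"
    using p by (simp add: int_cyc)
  also have "\<dots> = ((int s + int t) mod int p - int t) mod int p" by (simp add: zmod_int)
  also have "\<dots> = ((int s + int t) - int t) mod int p" by (rule mod_diff_left_eq)
  also have "\<dots> = int s" using p by simp
  finally show ?thesis by simp
qed

lemma mod_add_cyc: "0 < p \<Longrightarrow> s < p \<Longrightarrow> (cyc p s t + t) mod p = s"
proof -
  assume p: "0 < p" "s < p"
  have "int ((cyc p s t + t) mod p) = ((int s - int t) mod int p + int t) mod int p"
    using p by (simp add: int_cyc zmod_int)
  also have "\<dots> = int s mod int p" by (simp add: mod_add_left_eq)
  also have "\<dots> = int s" using p by simp
  finally show ?thesis by simp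
qed

lemma cyc_eq_0_iff: "0 < p \<Longrightarrow> r < p \<Longrightarrow> t < p \<Longrightarrow> cyc p r t = 0 \<longleftrightarrow> r = t"
proof -
  assume p: "0 < p" "r < p" "t < p"
  have "cyc p r t = 0 \<longleftrightarrow> (int r - int t) mod int p = 0" using p int_cyc[of p r t] by auto
  also have "\<dots> \<longleftrightarrow> int p dvd (int r - int t)" by (simp add: dvd_eq_mod_eq_0)
  also have "\<dots> \<longleftrightarrow> int r mod int p = int t mod int p" by (simp add: mod_eq_dvd_iff)
  also have "\<dots> \<longleftrightarrow> r = t" using p by simp
  finally show ?thesis .
qed

lemma sum_lessThan_mult:
  fixes f :: "nat \<Rightarrow> 'a::comm_monoid_add"
  shows "(\<Sum>c<m*p. f c) = (\<Sum>s<p. \<Sum>l<m. f (s*m + l))"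
proof -
  have "(\<Sum>c<m*p. f c) = (\<Sum>s<p. sum f {s * m..<s * m + m})"
    using sum.nat_group[of f m p] by (simp add: mult.commute)
  also have "\<dots> = (\<Sum>s<p. \<Sum>l<m. f (s*m + l))"
  proof (rule sum.cong[OF refl])
    fix s
    have "sum f {s * m..<s * m + m} = sum f {0 + s*m..<m + s*m}" by (simp add: add.commute)
    also have "\<dots> = (\<Sum>l = 0..<m. f (l + s*m))" by (rule sum.shift_bounds_nat_ivl)
    finally show "sum f {s * m..<s * m + m} = (\<Sum>l<m. f (s*m + l))"
      by (simp add: atLeast0LessThan add.commute)
  qed
  finally show ?thesis .
qed

lemma bcirc_tprod:
  assumes m: "0 < m" and p: "0 < p"
  shows "bcirc m m p (tprod m p S T) a b = (\<Sum>c<m*p. bcirc m m p S a c * bcirc m m p T c b)"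
proof -
  define r where "r = a div m"
  define t where "t = b div m"
  have "(\<Sum>c<m*p. bcirc m m p S a c * bcirc m m p T c b)
      = (\<Sum>s<p. \<Sum>l<m. bcirc m m p S a (s*m+l) * bcirc m m p T (s*m+l) b)"
    by (rule sum_lessThan_mult)
  also have "\<dots> = (\<Sum>s<p. \<Sum>l<m. S (a mod m) l (cyc p r s) * T l (b mod m) (cyc p s t))"
    unfolding bcirc_def r_def t_def using m by (intro sum.cong refl) auto
  also have "\<dots> = (\<Sum>s<p. \<Sum>l<m. S (a mod m) l (cyc p (cyc p r t) s) * T l (b mod m) s)"
  proof (rule sum.reindex_bij_witness[where j = "\<lambda>s. cyc p s t" and i = "\<lambda>s. (s + t) mod p"])
    fix s assume s: "s \<in> {..<p}"
    show "(cyc p s t + t) mod p = s" using s p by (simp add: mod_add_cyc)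
    show "cyc p s t \<in> {..<p}" using p by (simp add: cyc_less)
    show "(\<Sum>l<m. S (a mod m) l (cyc p (cyc p r t) (cyc p s t)) * T l (b mod m) (cyc p s t))
        = (\<Sum>l<m. S (a mod m) l (cyc p r s) * T l (b mod m) (cyc p s t))"
      using p by (simp add: cyc_cyc)
  next
    fix s assume s: "s \<in> {..<p}"
    show "cyc p ((s + t) mod p) t = s" using s p by (simp add: cyc_mod_add)
    show "(s + t) mod p \<in> {..<p}" using p by simp
  qed
  also have "\<dots> = bcirc m m p (tprod m p S T) a b"
    unfolding bcirc_def tprod_def r_def t_def by (simp add: sum.swap[of _ "{..<p}"])
  finally show ?thesis by simp
qed

lemma bcirc_tid:
  assumes m: "0 < m" and p: "0 < p" and a: "a < m*p" and b: "b < m*p"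
  shows "bcirc m m p tid a b = mat_id a b"
proof -
  have ad: "a div m < p" using a m by (simp add: div_less_iff_less_mult mult.commute)
  have bd: "b div m < p" using b m by (simp add: div_less_iff_less_mult mult.commute)
  have "(a mod m = b mod m \<and> cyc p (a div m) (b div m) = 0) \<longleftrightarrow> a = b"
    using cyc_eq_0_iff[OF p ad bd] by (metis div_mult_mod_eq)
  thus ?thesis unfolding bcirc_def tid_def mat_id_def by auto
qed

lemma bcirc_tpow:
  assumes m: "0 < m" and p: "0 < p" and ab: "a < m * p" "b < m * p"
  shows "bcirc m m p (tpow m p T q) a b = mat_pow (m * p) (bcirc m m p T) q a b"
  using ab
proof (induction q arbitrary: a b)
  case 0
  then show ?case using bcirc_tid[OF m p] by simp
next
  case (Suc q)
  then show ?case by (simp add: bcirc_tprod[OF m p] mat_mul_def)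
qed

lemma bcirc_texp:
  assumes m: "0 < m" and p: "0 < p" and ab: "a < m * p" "b < m * p"
  shows "bcirc m m p (texp m p T) a b = mat_exp (m * p) (bcirc m m p T) a b"
  using bcirc_tpow[OF assms] by (simp add: bcirc_def texp_def mat_exp_def)

lemma tTr_texp:
  "0 < m \<Longrightarrow> 0 < p \<Longrightarrow> tTr m p (texp m p T) = mat_trace (m * p) (mat_exp (m * p) (bcirc m m p T))"
  by (simp add: tTr_def mat_trace_def bcirc_texp)

lemma tTr_tprod:
  "0 < m \<Longrightarrow> 0 < p \<Longrightarrow>
   tTr m p (tprod m p S T) = mat_trace (m * p) (mat_mul (m * p) (bcirc m m p S) (bcirc m m p T))"
  by (simp add: tTr_def mat_trace_def bcirc_tprod mat_mul_def)

lemma hermitian_bcirc: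
  assumes m: "0 < m" and p: "0 < p" and T: "hermitian_tensor m p T"
  shows "hermitian (m * p) (bcirc m m p T)"
  unfolding hermitian_def
proof (intro allI impI)
  fix a b assume "a < m * p" "b < m * p"
  have "cnj (T (b mod m) (a mod m) (cyc p 0 (cyc p (a div m) (b div m))))
      = T (a mod m) (b mod m) (cyc p (a div m) (b div m))"
    using T m p cyc_less[OF p] unfolding hermitian_tensor_def tconjT_def by auto
  then show "cnj (bcirc m m p T b a) = bcirc m m p T a b"
    unfolding bcirc_def using cyc_0_cyc[OF p] by simp
qed

lemma hermitian_tensor_tadd:
  "hermitian_tensor m p S \<Longrightarrow> hermitian_tensor m p T \<Longrightarrow> hermitian_tensor m p (tadd S T)"
  by (simp add: hermitian_tensor_def tconjT_def tadd_def)

lemma hermitian_tensor_tscale: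
  "hermitian_tensor m p T \<Longrightarrow> hermitian_tensor m p (tscale c T)"
  by (simp add: hermitian_tensor_def tconjT_def tscale_def)

lemma tTr_texp_nonneg:
  "0 < m \<Longrightarrow> 0 < p \<Longrightarrow> hermitian_tensor m p T \<Longrightarrow> 0 \<le> tTr m p (texp m p T)"
  by (simp add: tTr_texp mat_trace_exp_nonneg hermitian_bcirc)

lemma tr_exp_nonneg:
  "0 < m \<Longrightarrow> 0 < p \<Longrightarrow> hermitian_tensor m p T \<Longrightarrow> 0 \<le> tr_exp m p T"
  using tTr_texp_nonneg by (simp add: tr_exp_def less_eq_complex_def)

theorem klein_inequality_tensor:
  assumes m: "0 < m" and p: "0 < p" and T: "hermitian_tensor m p T" and B: "hermitian_tensor m p B"
  shows "tr_exp m p T + Re (tTr m p (tprod m p (texp m p T) B)) \<le> tr_exp m p (tadd T B)"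
proof -
  have "mat_trace (m * p) (mat_mul (m * p) (bcirc m m p (texp m p T)) (bcirc m m p B))
      = mat_trace (m * p) (mat_mul (m * p) (mat_exp (m * p) (bcirc m m p T)) (bcirc m m p B))"
    unfolding mat_trace_def mat_mul_def by (simp add: bcirc_texp[OF m p])
  moreover have "bcirc m m p (tadd T B) = (\<lambda>a b. bcirc m m p T a b + bcirc m m p B a b)"
    by (intro ext) (simp add: bcirc_def tadd_def)
  ultimately show ?thesis
    using klein_inequality[OF hermitian_bcirc[OF m p T] hermitian_bcirc[OF m p B]]
    by (simp add: tr_exp_def tTr_texp[OF m p] tTr_tprod[OF m p])
qed

lemma tTr_tprod_tscale: "tTr m p (tprod m p S (tscale c T)) = of_real c * tTr m p (tprod m p S T)"
  by (simp add: tTr_def bcirc_def tprod_def tscale_def sum_distrib_left mult_ac)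

lemma tr_exp_midpoint_convex:
  assumes m: "0 < m" and p: "0 < p" and T: "hermitian_tensor m p T" and B: "hermitian_tensor m p B"
  shows "2 * tr_exp m p T \<le> tr_exp m p (tadd T B) + tr_exp m p (tadd T (tscale (-1) B))"
proof -
  have "tr_exp m p T + Re (tTr m p (tprod m p (texp m p T) B)) \<le> tr_exp m p (tadd T B)"
    "tr_exp m p T - Re (tTr m p (tprod m p (texp m p T) B)) \<le> tr_exp m p (tadd T (tscale (-1) B))"
    using klein_inequality_tensor[OF m p T B]
      klein_inequality_tensor[OF m p T hermitian_tensor_tscale[where c = "-1", OF B]]
    by (simp_all add: tTr_tprod_tscale)
  then show ?thesis by linarith
qed

section \<open>Locality, summability and measurability of the trace exponential\<close>

lemma tpow_cong:
  assumes p: "0 < p" and eq: "\<forall>i<m. \<forall>j<m. \<forall>k<p. S i j k = T i j k"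
  shows "i < m \<Longrightarrow> j < m \<Longrightarrow> k < p \<Longrightarrow> tpow m p S q i j k = tpow m p T q i j k"
proof (induction q arbitrary: i j k)
  case 0
  then show ?case by simp
next
  case (Suc q)
  have "tprod m p S (tpow m p S q) i j k = tprod m p T (tpow m p T q) i j k"
    unfolding tprod_def
  proof (rule sum.cong[OF refl], rule sum.cong[OF refl])
    fix s l assume s: "s \<in> {..<p}" and l: "l \<in> {..<m}"
    have "S i l (cyc p k s) = T i l (cyc p k s)" using eq Suc.prems(1) l cyc_less[OF p] by auto
    moreover have "tpow m p S q l j s = tpow m p T q l j s" using Suc.IH l Suc.prems(2) s by auto
    ultimately show "S i l (cyc p k s) * tpow m p S q l j s = T i l (cyc p k s) * tpow m p T q l j s" by simp
  qed
  then show ?case by simp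
qed

lemma tTr_texp_cong:
  assumes m: "0 < m" and p: "0 < p" and eq: "\<forall>i<m. \<forall>j<m. \<forall>k<p. S i j k = T i j k"
  shows "tTr m p (texp m p S) = tTr m p (texp m p T)"
  unfolding tTr_def bcirc_def
proof (rule sum.cong[OF refl])
  fix a assume "a \<in> {..<m*p}"
  have 1: "a mod m < m" using m by simp
  have 2: "cyc p (a div m) (a div m) < p" using cyc_less[OF p] by simp
  show "texp m p S (a mod m) (a mod m) (cyc p (a div m) (a div m)) = texp m p T (a mod m) (a mod m) (cyc p (a div m) (a div m))"
    unfolding texp_def using tpow_cong[OF p eq 1 1 2] by simp
qed

lemma tr_exp_cong:
  "0 < m \<Longrightarrow> 0 < p \<Longrightarrow> \<forall>i<m. \<forall>j<m. \<forall>k<p. S i j k = T i j k \<Longrightarrow>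
   tr_exp m p S = tr_exp m p T"
  unfolding tr_exp_def by (simp only: tTr_texp_cong)

lemma tpow_norm_bound:
  assumes p: "0 < p" and K: "\<forall>i<m. \<forall>j<m. \<forall>k<p. cmod (T i j k) \<le> K" and K0: "0 \<le> K"
  shows "i < m \<Longrightarrow> j < m \<Longrightarrow> k < p \<Longrightarrow> cmod (tpow m p T q i j k) \<le> (real (m*p) * K)^q"
proof (induction q arbitrary: i j k)
  case 0
  then show ?case by (simp add: tid_def)
next
  case (Suc q)
  have "cmod (tpow m p T (Suc q) i j k) = cmod (\<Sum>s<p. \<Sum>l<m. T i l (cyc p k s) * tpow m p T q l j s)"
    by (simp add: tprod_def)
  also have "\<dots> \<le> (\<Sum>s<p. cmod (\<Sum>l<m. T i l (cyc p k s) * tpow m p T q l j s))" by (rule norm_sum)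
  also have "\<dots> \<le> (\<Sum>s<p. \<Sum>l<m. cmod (T i l (cyc p k s)) * cmod (tpow m p T q l j s))"
    by (rule sum_mono, rule order_trans[OF norm_sum]) (simp add: norm_mult)
  also have "\<dots> \<le> (\<Sum>s<p. \<Sum>l<m. K * (real (m*p) * K)^q)"
  proof (rule sum_mono, rule sum_mono)
    fix s l assume s: "s \<in> {..<p}" and l: "l \<in> {..<m}"
    have "cmod (T i l (cyc p k s)) \<le> K" using K Suc.prems(1) l cyc_less[OF p] by auto
    moreover have "cmod (tpow m p T q l j s) \<le> (real (m*p) * K)^q" using Suc.IH l Suc.prems(2) s by auto
    ultimately show "cmod (T i l (cyc p k s)) * cmod (tpow m p T q l j s) \<le> K * (real (m*p) * K)^q"
      using K0 by (intro mult_mono) auto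
  qed
  also have "\<dots> = real p * (real m * (K * (real (m*p) * K)^q))" by simp
  also have "\<dots> = (real (m*p) * K)^(Suc q)" by (simp only: power_Suc of_nat_mult mult_ac)
  finally show ?case .
qed

lemma summable_texp:
  assumes p: "0 < p" and i: "i < m" "j < m" "k < p"
  shows "summable (\<lambda>q. tpow m p T q i j k / of_nat (fact q))"
proof -
  define K where "K = (\<Sum>i<m. \<Sum>j<m. \<Sum>k<p. cmod (T i j k))"
  have K0: "0 \<le> K" unfolding K_def by (intro sum_nonneg) auto
  have KK: "\<forall>i<m. \<forall>j<m. \<forall>k<p. cmod (T i j k) \<le> K"
  proof (intro allI impI)
    fix i j k assume ijk: "i < m" "j < m" "k < p"
    have "cmod (T i j k) \<le> (\<Sum>k<p. cmod (T i j k))" using ijk by (intro member_le_sum) auto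
    also have "\<dots> \<le> (\<Sum>j<m. \<Sum>k<p. cmod (T i j k))" using ijk
      by (intro member_le_sum[of j "{..<m}" "\<lambda>j. \<Sum>k<p. cmod (T i j k)"]) (auto intro!: sum_nonneg)
    also have "\<dots> \<le> K" unfolding K_def using ijk
      by (intro member_le_sum[of i "{..<m}" "\<lambda>i. \<Sum>j<m. \<Sum>k<p. cmod (T i j k)"]) (auto intro!: sum_nonneg)
    finally show "cmod (T i j k) \<le> K" .
  qed
  have "summable (\<lambda>q. (real (m*p) * K)^q /\<^sub>R fact q)" using exp_converges sums_summable by blast
  moreover have "norm (tpow m p T q i j k / of_nat (fact q)) \<le> (real (m*p) * K)^q /\<^sub>R fact q" for q
  proof -
    have "norm (tpow m p T q i j k / of_nat (fact q)) = cmod (tpow m p T q i j k) / fact q"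
      by (simp add: norm_divide)
    also have "\<dots> \<le> (real (m*p) * K)^q / fact q"
      by (rule divide_right_mono[OF tpow_norm_bound[OF p KK K0 i]]) simp
    finally show ?thesis by (simp add: divide_inverse mult.commute)
  qed
  ultimately show ?thesis by (rule summable_comparison_test'[where N=0])
qed

lemma tpow_measurable:
  assumes p: "0 < p"
    and T: "\<And>i j k. i < m \<Longrightarrow> j < m \<Longrightarrow> k < p \<Longrightarrow> (\<lambda>\<omega>. T \<omega> i j k) \<in> borel_measurable N"
  shows "i < m \<Longrightarrow> j < m \<Longrightarrow> k < p \<Longrightarrow> (\<lambda>\<omega>. tpow m p (T \<omega>) q i j k) \<in> borel_measurable N"
proof (induction q arbitrary: i j k)
  case 0
  then show ?case by simp
next
  case (Suc q)
  have "(\<lambda>\<omega>. \<Sum>s<p. \<Sum>l<m. T \<omega> i l (cyc p k s) * tpow m p (T \<omega>) q l j s) \<in> borel_measurable N"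
  proof (rule borel_measurable_sum, rule borel_measurable_sum, rule borel_measurable_times)
    fix s l assume s: "s \<in> {..<p}" and l: "l \<in> {..<m}"
    show "(\<lambda>\<omega>. T \<omega> i l (cyc p k s)) \<in> borel_measurable N" using T Suc.prems(1) l cyc_less[OF p] by auto
    show "(\<lambda>\<omega>. tpow m p (T \<omega>) q l j s) \<in> borel_measurable N" using Suc.IH l Suc.prems(2) s by auto
  qed
  then show ?case by (simp add: tprod_def)
qed

lemma measurable_tTr_texp:
  assumes m: "0 < m" and p: "0 < p"
    and T: "\<And>i j k. i < m \<Longrightarrow> j < m \<Longrightarrow> k < p \<Longrightarrow> (\<lambda>\<omega>. T \<omega> i j k) \<in> borel_measurable N"
  shows "(\<lambda>\<omega>. tTr m p (texp m p (T \<omega>))) \<in> borel_measurable N"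
  unfolding tTr_def bcirc_def
proof (rule borel_measurable_sum)
  fix a assume "a \<in> {..<m*p}"
  have i: "a mod m < m" using m by simp
  have k: "cyc p (a div m) (a div m) < p" using cyc_less[OF p] by simp
  define i0 where "i0 = a mod m"
  define k0 where "k0 = cyc p (a div m) (a div m)"
  have "(\<lambda>\<omega>. texp m p (T \<omega>) i0 i0 k0) \<in> borel_measurable N"
    unfolding texp_def
  proof (rule borel_measurable_LIMSEQ_metric)
    fix n
    show "(\<lambda>\<omega>. \<Sum>q<n. tpow m p (T \<omega>) q i0 i0 k0 / of_nat (fact q)) \<in> borel_measurable N"
      using tpow_measurable[OF p T] i k unfolding i0_def k0_def
      by (intro borel_measurable_sum borel_measurable_divide) auto
  next
    fix \<omega>
    show "(\<lambda>n. \<Sum>q<n. tpow m p (T \<omega>) q i0 i0 k0 / of_nat (fact q))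
        \<longlonglongrightarrow> (\<Sum>q. tpow m p (T \<omega>) q i0 i0 k0 / of_nat (fact q))"
      using summable_texp[OF p] i k unfolding i0_def k0_def by (intro summable_LIMSEQ) auto
  qed
  then show "(\<lambda>\<omega>. texp m p (T \<omega>) (a mod m) (a mod m) (cyc p (a div m) (a div m))) \<in> borel_measurable N"
    unfolding i0_def k0_def .
qed


lemma measurable_tr_exp_affine:
  assumes m: "0 < m" and p: "0 < p"
    and X: "\<And>i j k. i < m \<Longrightarrow> j < m \<Longrightarrow> k < p \<Longrightarrow> (\<lambda>\<omega>. X \<omega> i j k) \<in> borel_measurable N"
  shows "(\<lambda>\<omega>. tr_exp m p (tadd A (tscale c (X \<omega>)))) \<in> borel_measurable N"
proof -
  have "(\<lambda>\<omega>. tTr m p (texp m p (tadd A (tscale c (X \<omega>))))) \<in> borel_measurable N"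
    by (rule measurable_tTr_texp[OF m p])
      (unfold tadd_def tscale_def, intro borel_measurable_add borel_measurable_times borel_measurable_const X; simp)
  then show ?thesis unfolding tr_exp_def by measurable
qed

section \<open>Symmetrization\<close>

lemma ennreal_integral_le_nn_integral:
  fixes f :: "'a \<Rightarrow> real"
  assumes "integrable M f"
  shows "ennreal (\<integral>x. f x \<partial>M) \<le> (\<integral>\<^sup>+x. ennreal (f x) \<partial>M)"
proof -
  have "ennreal (\<integral>x. f x \<partial>M) \<le> ennreal (\<integral>x. max 0 (f x) \<partial>M)"
    using assms by (intro ennreal_leI integral_mono) auto
  also have "\<dots> = (\<integral>\<^sup>+x. ennreal (max 0 (f x)) \<partial>M)"
    using assms by (intro nn_integral_eq_integral[symmetric]) auto
  finally show ?thesis by (simp add: ennreal_max_0)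
qed

lemma integral_le_of_nn_integral_le:
  fixes f g :: "'a \<Rightarrow> complex"
  assumes f: "integrable M f" "\<forall>x\<in>space M. 0 \<le> f x"
    and g: "integrable M g" "\<forall>x\<in>space M. 0 \<le> g x"
    and le: "(\<integral>\<^sup>+x. ennreal (Re (f x)) \<partial>M) \<le> (\<integral>\<^sup>+x. ennreal (Re (g x)) \<partial>M)"
  shows "(\<integral>x. f x \<partial>M) \<le> (\<integral>x. g x \<partial>M)"
proof -
  have real: "Im (\<integral>x. h x \<partial>M) = 0 \<and> 0 \<le> Re (\<integral>x. h x \<partial>M)
      \<and> ennreal (Re (\<integral>x. h x \<partial>M)) = (\<integral>\<^sup>+x. ennreal (Re (h x)) \<partial>M)"
    if h: "integrable M h" "\<forall>x\<in>space M. 0 \<le> h x" for h :: "'a \<Rightarrow> complex"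
  proof -
    have Im0: "\<And>x. x \<in> space M \<Longrightarrow> Im (h x) = 0" and Re0: "\<And>x. x \<in> space M \<Longrightarrow> 0 \<le> Re (h x)"
      using h(2) by (auto simp: less_eq_complex_def)
    have "Im (\<integral>x. h x \<partial>M) = (\<integral>x. Im (h x) \<partial>M)" using h(1) by (rule integral_Im[symmetric])
    also have "\<dots> = 0" using Im0 by (simp cong: Bochner_Integration.integral_cong)
    finally have "Im (\<integral>x. h x \<partial>M) = 0" .
    moreover have "Re (\<integral>x. h x \<partial>M) = (\<integral>x. Re (h x) \<partial>M)" using h(1) by (rule integral_Re[symmetric])
    moreover have "0 \<le> (\<integral>x. Re (h x) \<partial>M)" using Re0 by (intro integral_nonneg_AE AE_I2)
    moreover have "(\<integral>\<^sup>+x. ennreal (Re (h x)) \<partial>M) = ennreal (\<integral>x. Re (h x) \<partial>M)"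
      using h(1) Re0 by (intro nn_integral_eq_integral integrable_Re AE_I2) auto
    ultimately show ?thesis by simp
  qed
  have "ennreal (Re (\<integral>x. f x \<partial>M)) \<le> ennreal (Re (\<integral>x. g x \<partial>M))"
    using le real[OF f] real[OF g] by simp
  then have "Re (\<integral>x. f x \<partial>M) \<le> Re (\<integral>x. g x \<partial>M)"
    using real[OF g] by (metis ennreal_le_iff)
  then show ?thesis using real[OF f] real[OF g] by (simp add: less_eq_complex_def)
qed

lemma centered_tTr_tprod:
  assumes m: "0 < m"
    and X: "\<forall>i<m. \<forall>j<m. \<forall>k<p. integrable M (\<lambda>\<omega>. X \<omega> i j k) \<and> (\<integral>\<omega>. X \<omega> i j k \<partial>M) = 0"
  shows "integrable M (\<lambda>\<omega>. tTr m p (tprod m p E (X \<omega>)))"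
    and "(\<integral>\<omega>. tTr m p (tprod m p E (X \<omega>)) \<partial>M) = 0"
proof -
  define c where "c a s l = E (a mod m) l (cyc p (cyc p (a div m) (a div m)) s)" for a s l
  have expand: "tTr m p (tprod m p E (X \<omega>)) = (\<Sum>a<m*p. \<Sum>s<p. \<Sum>l<m. c a s l * X \<omega> l (a mod m) s)" for \<omega>
    by (simp add: tTr_def bcirc_def tprod_def c_def)
  have entry: "has_bochner_integral M (\<lambda>\<omega>. c a s l * X \<omega> l (a mod m) s) 0" if "s < p" "l < m" for a s l
    using X that m by (simp add: has_bochner_integral_iff)
  have "has_bochner_integral M (\<lambda>\<omega>. tTr m p (tprod m p E (X \<omega>))) (\<Sum>a<m*p. \<Sum>s<p. \<Sum>l<m. 0)"
    unfolding expand using entry by (intro has_bochner_integral_sum) auto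
  then show "integrable M (\<lambda>\<omega>. tTr m p (tprod m p E (X \<omega>)))"
    and "(\<integral>\<omega>. tTr m p (tprod m p E (X \<omega>)) \<partial>M) = 0"
    by (simp_all add: has_bochner_integral_iff)
qed

lemma tr_exp_le_nn_integral_centered:
  assumes M: "prob_space M" and m: "0 < m" and p: "0 < p" and T: "hermitian_tensor m p T"
    and X_herm: "\<forall>\<omega>\<in>space M. hermitian_tensor m p (X \<omega>)"
    and X: "\<forall>i<m. \<forall>j<m. \<forall>k<p. integrable M (\<lambda>\<omega>. X \<omega> i j k) \<and> (\<integral>\<omega>. X \<omega> i j k \<partial>M) = 0"
  shows "ennreal (tr_exp m p T) \<le> (\<integral>\<^sup>+\<omega>. ennreal (tr_exp m p (tadd T (X \<omega>))) \<partial>M)"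
proof -
  interpret prob_space M by (rule M)
  define L where "L \<omega> = tr_exp m p T + Re (tTr m p (tprod m p (texp m p T) (X \<omega>)))" for \<omega>
  note lin = centered_tTr_tprod[OF m X, of "texp m p T"]
  have L: "integrable M L" unfolding L_def using lin by simp
  have "ennreal (tr_exp m p T) = ennreal (\<integral>\<omega>. L \<omega> \<partial>M)"
    unfolding L_def using lin by (simp add: integral_Re[symmetric] prob_space)
  also have "\<dots> \<le> (\<integral>\<^sup>+\<omega>. ennreal (L \<omega>) \<partial>M)" by (rule ennreal_integral_le_nn_integral[OF L])
  also have "\<dots> \<le> (\<integral>\<^sup>+\<omega>. ennreal (tr_exp m p (tadd T (X \<omega>))) \<partial>M)"
    using klein_inequality_tensor[OF m p T] X_herm unfolding L_def by (intro nn_integral_mono ennreal_leI) auto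
  finally show ?thesis .
qed

lemma ennreal_le_half_add:
  fixes t a b :: real
  assumes "2 * t \<le> a + b" "0 \<le> a" "0 \<le> b"
  shows "ennreal t \<le> ennreal a / 2 + ennreal b / 2"
proof -
  have "ennreal t \<le> ennreal (a / 2 + b / 2)"
    using assms(1) by (intro ennreal_leI) (simp add: field_simps)
  also have "\<dots> = ennreal a / 2 + ennreal b / 2"
    using assms(2,3) by (simp add: ennreal_plus ennreal_divide_numeral)
  finally show ?thesis .
qed

lemma nn_integral_tr_exp_symmetrization:
  assumes M: "prob_space M" and m: "0 < m" and p: "0 < p" and A: "hermitian_tensor m p A"
    and X_herm: "\<forall>\<omega>\<in>space M. hermitian_tensor m p (X \<omega>)"
    and X: "\<forall>i<m. \<forall>j<m. \<forall>k<p. integrable M (\<lambda>\<omega>. X \<omega> i j k) \<and> (\<integral>\<omega>. X \<omega> i j k \<partial>M) = 0"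
  shows "(\<integral>\<^sup>+\<omega>. ennreal (tr_exp m p (tadd A (X \<omega>))) \<partial>M)
       \<le> (\<integral>\<^sup>+\<omega>. ennreal (tr_exp m p (tadd A (tscale 2 (X \<omega>)))) \<partial>M) / 2
         + (\<integral>\<^sup>+\<omega>. ennreal (tr_exp m p (tadd A (tscale (-2) (X \<omega>)))) \<partial>M) / 2"
proof -
  interpret prob_space M by (rule M)
  define F where "F c \<omega> = ennreal (tr_exp m p (tadd A (tscale c (X \<omega>))))" for c \<omega>
  have F_meas: "F c \<in> borel_measurable M" for c
    unfolding F_def using X by (intro measurable_compose[OF measurable_tr_exp_affine[OF m p]]) (auto intro: borel_measurable_integrable)
  have herm: "hermitian_tensor m p (tadd A (tscale c (X \<omega>)))" if "\<omega> \<in> space M" for c \<omega>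
    using A X_herm that by (intro hermitian_tensor_tadd hermitian_tensor_tscale) auto
  have X_neg: "\<forall>i<m. \<forall>j<m. \<forall>k<p. integrable M (\<lambda>\<omega>. tscale (-1) (X \<omega>) i j k)
      \<and> (\<integral>\<omega>. tscale (-1) (X \<omega>) i j k \<partial>M) = 0"
    using X by (simp add: tscale_def)
  have pointwise: "ennreal (tr_exp m p (tadd A (X \<omega>))) \<le> F 2 \<omega> / 2 + (\<integral>\<^sup>+\<omega>'. F (-2) \<omega>' \<partial>M) / 2"
    if \<omega>: "\<omega> \<in> space M" for \<omega>
  proof -
    \<comment> \<open>integrating over a second variable \<omega>' realises an independent copy X \<omega>' of X\<close>
    have "ennreal (tr_exp m p (tadd A (X \<omega>)))
        \<le> (\<integral>\<^sup>+\<omega>'. ennreal (tr_exp m p (tadd (tadd A (X \<omega>)) (tscale (-1) (X \<omega>')))) \<partial>M)"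
      using A X_herm \<omega>
      by (intro tr_exp_le_nn_integral_centered[OF M m p _ _ X_neg] hermitian_tensor_tadd ballI hermitian_tensor_tscale) auto
    also have "\<dots> \<le> (\<integral>\<^sup>+\<omega>'. (F 2 \<omega> / 2 + F (-2) \<omega>' / 2) \<partial>M)"
    proof (rule nn_integral_mono)
      fix \<omega>' assume \<omega>': "\<omega>' \<in> space M"
      let ?T = "tadd (tadd A (X \<omega>)) (tscale (-1) (X \<omega>'))" and ?B = "tadd (X \<omega>) (X \<omega>')"
      have eqs: "tadd ?T ?B = tadd A (tscale 2 (X \<omega>))" "tadd ?T (tscale (-1) ?B) = tadd A (tscale (-2) (X \<omega>'))"
        unfolding tadd_def tscale_def by (auto simp: fun_eq_iff algebra_simps)
      have "2 * tr_exp m p ?T \<le> tr_exp m p (tadd ?T ?B) + tr_exp m p (tadd ?T (tscale (-1) ?B))"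
        using A X_herm \<omega> \<omega>'
        by (intro tr_exp_midpoint_convex[OF m p] hermitian_tensor_tadd hermitian_tensor_tscale) auto
      then show "ennreal (tr_exp m p ?T) \<le> F 2 \<omega> / 2 + F (-2) \<omega>' / 2"
        unfolding F_def eqs
        by (rule ennreal_le_half_add[OF _ tr_exp_nonneg[OF m p herm[OF \<omega>]] tr_exp_nonneg[OF m p herm[OF \<omega>']]])
    qed
    also have "\<dots> = F 2 \<omega> / 2 + (\<integral>\<^sup>+\<omega>'. F (-2) \<omega>' \<partial>M) / 2"
      using F_meas by (simp add: nn_integral_add nn_integral_divide emeasure_space_1)
    finally show ?thesis .
  qed
  have "(\<integral>\<^sup>+\<omega>. ennreal (tr_exp m p (tadd A (X \<omega>))) \<partial>M) \<le> (\<integral>\<^sup>+\<omega>. (F 2 \<omega> / 2 + (\<integral>\<^sup>+\<omega>'. F (-2) \<omega>' \<partial>M) / 2) \<partial>M)"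
    using pointwise by (rule nn_integral_mono)
  also have "\<dots> = (\<integral>\<^sup>+\<omega>. F 2 \<omega> \<partial>M) / 2 + (\<integral>\<^sup>+\<omega>. F (-2) \<omega> \<partial>M) / 2"
    using F_meas by (simp add: nn_integral_add nn_integral_divide emeasure_space_1)
  finally show ?thesis unfolding F_def .
qed

lemma nn_integral_indep_mult:
  fixes g :: "'b \<Rightarrow> ennreal" and h :: "'c \<Rightarrow> ennreal"
  assumes M: "prob_space M" and Y: "Y \<in> M \<rightarrow>\<^sub>M N" and Z: "Z \<in> M \<rightarrow>\<^sub>M K"
    and indep: "prob_space.indep_set M {Y -` S \<inter> space M | S. S \<in> sets N} {Z -` S \<inter> space M | S. S \<in> sets K}"
    and g: "g \<in> borel_measurable N" and h: "h \<in> borel_measurable K"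
  shows "(\<integral>\<^sup>+\<omega>. g (Y \<omega>) * h (Z \<omega>) \<partial>M) = (\<integral>\<^sup>+\<omega>. g (Y \<omega>) \<partial>M) * (\<integral>\<^sup>+\<omega>. h (Z \<omega>) \<partial>M)"
proof -
  interpret prob_space M by (rule M)
  have Int_stable: "Int_stable {W -` S \<inter> space M | S. S \<in> sets L}" for W :: "'a \<Rightarrow> 'd" and L
  proof (safe intro!: Int_stableI)
    fix S S' assume "S \<in> sets L" "S' \<in> sets L"
    then show "\<exists>C. (W -` S \<inter> space M) \<inter> (W -` S' \<inter> space M) = W -` C \<inter> space M \<and> C \<in> sets L"
      by (intro exI[of _ "S \<inter> S'"]) auto
  qed
  have coarser: "{(f \<circ> W) -` A \<inter> space M | A. A \<in> sets borel} \<subseteq> {W -` S \<inter> space M | S. S \<in> sets L}"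
    if W: "W \<in> M \<rightarrow>\<^sub>M L" and f: "f \<in> borel_measurable L" for W :: "'a \<Rightarrow> 'd" and L and f :: "'d \<Rightarrow> ennreal"
  proof safe
    fix A :: "ennreal set" assume "A \<in> sets borel"
    then have "f -` A \<inter> space L \<in> sets L" using f by measurable
    moreover have "(f \<circ> W) -` A \<inter> space M = W -` (f -` A \<inter> space L) \<inter> space M"
      using measurable_space[OF W] by auto
    ultimately show "\<exists>S. (f \<circ> W) -` A \<inter> space M = W -` S \<inter> space M \<and> S \<in> sets L" by blast
  qed
  have "indep_set {(g \<circ> Y) -` A \<inter> space M | A. A \<in> sets borel} {(h \<circ> Z) -` A \<inter> space M | A. A \<in> sets borel}"
    using indep unfolding indep_set_def
    by (rule indep_sets_mono_sets) (use coarser[OF Y g] coarser[OF Z h] in \<open>auto split: bool.split\<close>)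
  then have "indep_var borel (g \<circ> Y) borel (h \<circ> Z)"
    unfolding indep_var_eq using Y Z g h indep_set_sigma_sets[OF _ Int_stable Int_stable] by auto
  moreover have borel: "case_bool borel borel = (\<lambda>_. borel)" by (rule ext) (simp split: bool.split)
  ultimately have "indep_vars (\<lambda>_. borel) (case_bool (g \<circ> Y) (h \<circ> Z)) UNIV"
    unfolding indep_var_def by (simp only: borel)
  then have "(\<integral>\<^sup>+\<omega>. (\<Prod>b\<in>UNIV. case_bool (g \<circ> Y) (h \<circ> Z) b \<omega>) \<partial>M)
      = (\<Prod>b\<in>UNIV. \<integral>\<^sup>+\<omega>. case_bool (g \<circ> Y) (h \<circ> Z) b \<omega> \<partial>M)"
    by (intro indep_vars_nn_integral) auto
  then show ?thesis by (simp add: UNIV_bool mult.commute comp_def)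
qed

lemma nn_integral_indicator_tr_exp:
  fixes \<beta> :: "'w \<Rightarrow> real"
  assumes M: "prob_space M" and m: "0 < m" and p: "0 < p"
    and X: "\<And>i j k. i < m \<Longrightarrow> j < m \<Longrightarrow> k < p \<Longrightarrow> (\<lambda>\<omega>. X \<omega> i j k) \<in> borel_measurable M"
    and \<beta>: "\<beta> \<in> borel_measurable M"
    and indep: "prob_space.indep_set M
           {\<beta> -` S \<inter> space M | S. S \<in> sets borel}
           {(\<lambda>\<omega>. restrict (\<lambda>(i,j,k). X \<omega> i j k) ({..<m} \<times> {..<m} \<times> {..<p})) -` S \<inter> space M
              | S. S \<in> sets (PiM ({..<m} \<times> {..<m} \<times> {..<p}) (\<lambda>_. borel))}"
  shows "(\<integral>\<^sup>+\<omega>. indicator {v} (\<beta> \<omega>) * ennreal (tr_exp m p (tadd A (tscale c (X \<omega>)))) \<partial>M)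
       = emeasure M {\<omega>\<in>space M. \<beta> \<omega> = v} * (\<integral>\<^sup>+\<omega>. ennreal (tr_exp m p (tadd A (tscale c (X \<omega>)))) \<partial>M)"
proof -
  define I where "I = {..<m} \<times> {..<m} \<times> {..<p}"
  define Xr where "Xr = (\<lambda>\<omega>. restrict (\<lambda>(i,j,k). X \<omega> i j k) I)"
  \<comment> \<open>independence is only assumed for the restriction Xr, which is undefined off the index box\<close>
  define G where "G x = ennreal (tr_exp m p (tadd A (tscale c (\<lambda>i j k. x (i, j, k)))))"
    for x :: "nat \<times> nat \<times> nat \<Rightarrow> complex"
  have Xr: "Xr \<in> M \<rightarrow>\<^sub>M PiM I (\<lambda>_. borel)"
    unfolding Xr_def I_def by (rule measurable_restrict) (auto intro: X)
  have G: "G \<in> borel_measurable (PiM I (\<lambda>_. borel))"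
    unfolding G_def I_def
    by (intro measurable_compose[OF measurable_tr_exp_affine[OF m p]] measurable_component_singleton) auto
  have GXr: "G (Xr \<omega>) = ennreal (tr_exp m p (tadd A (tscale c (X \<omega>))))" for \<omega>
    unfolding G_def Xr_def I_def
    by (intro arg_cong[where f = ennreal] tr_exp_cong[OF m p]) (simp add: tadd_def tscale_def)
  have "(\<integral>\<^sup>+\<omega>. indicator {v} (\<beta> \<omega>) * G (Xr \<omega>) \<partial>M) = (\<integral>\<^sup>+\<omega>. indicator {v} (\<beta> \<omega>) \<partial>M) * (\<integral>\<^sup>+\<omega>. G (Xr \<omega>) \<partial>M)"
    using indep unfolding Xr_def I_def
    by (intro nn_integral_indep_mult[OF M \<beta> Xr[unfolded Xr_def I_def] _ _ G[unfolded I_def]]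
        borel_measurable_indicator borel_closed closed_singleton)
  also have "(\<integral>\<^sup>+\<omega>. indicator {v} (\<beta> \<omega>) \<partial>M) = (\<integral>\<^sup>+\<omega>. indicator {\<omega>\<in>space M. \<beta> \<omega> = v} \<omega> \<partial>M)"
    by (intro nn_integral_cong) (simp add: indicator_def)
  also have "\<dots> = emeasure M {\<omega>\<in>space M. \<beta> \<omega> = v}"
    using \<beta> by (intro nn_integral_indicator) measurable
  finally show ?thesis by (simp add: GXr)
qed

lemma nn_integral_tr_exp_rademacher:
  assumes M: "prob_space M" and m: "0 < m" and p: "0 < p"
    and X: "\<And>i j k. i < m \<Longrightarrow> j < m \<Longrightarrow> k < p \<Longrightarrow> (\<lambda>\<omega>. X \<omega> i j k) \<in> borel_measurable M"
    and \<beta>: "\<beta> \<in> borel_measurable M"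
    and \<beta>1: "prob_space.prob M {\<omega>\<in>space M. \<beta> \<omega> = 1} = 1/2"
    and \<beta>2: "prob_space.prob M {\<omega>\<in>space M. \<beta> \<omega> = -1} = 1/2"
    and indep: "prob_space.indep_set M
           {\<beta> -` S \<inter> space M | S. S \<in> sets borel}
           {(\<lambda>\<omega>. restrict (\<lambda>(i,j,k). X \<omega> i j k) ({..<m} \<times> {..<m} \<times> {..<p})) -` S \<inter> space M
              | S. S \<in> sets (PiM ({..<m} \<times> {..<m} \<times> {..<p}) (\<lambda>_. borel))}"
  shows "(\<integral>\<^sup>+\<omega>. ennreal (tr_exp m p (tadd A (tscale (2 * \<beta> \<omega>) (X \<omega>)))) \<partial>M)
       = (\<integral>\<^sup>+\<omega>. ennreal (tr_exp m p (tadd A (tscale 2 (X \<omega>)))) \<partial>M) / 2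
         + (\<integral>\<^sup>+\<omega>. ennreal (tr_exp m p (tadd A (tscale (-2) (X \<omega>)))) \<partial>M) / 2"
proof -
  interpret prob_space M by (rule M)
  define F where "F c \<omega> = ennreal (tr_exp m p (tadd A (tscale c (X \<omega>))))" for c \<omega>
  have F_meas: "F c \<in> borel_measurable M" for c
    unfolding F_def by (intro measurable_compose[OF measurable_tr_exp_affine[OF m p]] X) auto
  have half: "ennreal (1/2) * x = x / 2" for x :: ennreal
    by (simp add: ennreal_divide_numeral[of 1, symmetric] ennreal_times_divide mult.commute, simp add: divide_ennreal_def)
  have "prob ({\<omega>\<in>space M. \<beta> \<omega> = 1} \<union> {\<omega>\<in>space M. \<beta> \<omega> = -1}) = 1"
    using \<beta>1 \<beta>2 \<beta> by (subst finite_measure_Union) auto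
  then have "AE \<omega> in M. \<omega> \<in> {\<omega>\<in>space M. \<beta> \<omega> = 1} \<union> {\<omega>\<in>space M. \<beta> \<omega> = -1}"
    by (rule AE_prob_1)
  then have "AE \<omega> in M. F (2 * \<beta> \<omega>) \<omega> = indicator {1} (\<beta> \<omega>) * F 2 \<omega> + indicator {-1} (\<beta> \<omega>) * F (-2) \<omega>"
    by eventually_elim auto
  then have "(\<integral>\<^sup>+\<omega>. F (2 * \<beta> \<omega>) \<omega> \<partial>M)
      = (\<integral>\<^sup>+\<omega>. indicator {1} (\<beta> \<omega>) * F 2 \<omega> \<partial>M) + (\<integral>\<^sup>+\<omega>. indicator {-1} (\<beta> \<omega>) * F (-2) \<omega> \<partial>M)"
    using \<beta> F_meas by (simp add: nn_integral_cong_AE nn_integral_add)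
  also have "\<dots> = emeasure M {\<omega>\<in>space M. \<beta> \<omega> = 1} * (\<integral>\<^sup>+\<omega>. F 2 \<omega> \<partial>M)
      + emeasure M {\<omega>\<in>space M. \<beta> \<omega> = -1} * (\<integral>\<^sup>+\<omega>. F (-2) \<omega> \<partial>M)"
    unfolding F_def by (intro arg_cong2[where f = "(+)"] nn_integral_indicator_tr_exp[OF M m p X \<beta> indep])
  also have "\<dots> = (\<integral>\<^sup>+\<omega>. F 2 \<omega> \<partial>M) / 2 + (\<integral>\<^sup>+\<omega>. F (-2) \<omega> \<partial>M) / 2"
    by (simp only: emeasure_eq_measure \<beta>1 \<beta>2 half)
  finally show ?thesis unfolding F_def .
qed

theorem lemma7:
  fixes M :: "'w measure" and m p :: nat and A :: tensor
    and X :: "'w \<Rightarrow> tensor" and \<beta> :: "'w \<Rightarrow> real"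
  assumes "prob_space M"
    and "0 < m" and "0 < p"
    and "hermitian_tensor m p A"
    and "\<forall>\<omega>\<in>space M. hermitian_tensor m p (X \<omega>)"
    and "\<forall>i<m. \<forall>j<m. \<forall>k<p. integrable M (\<lambda>\<omega>. X \<omega> i j k)
            \<and> (\<integral>\<omega>. X \<omega> i j k \<partial>M) = 0"
    and "\<beta> \<in> borel_measurable M"
    and "prob_space.prob M {\<omega>\<in>space M. \<beta> \<omega> = 1} = 1/2"
    and "prob_space.prob M {\<omega>\<in>space M. \<beta> \<omega> = -1} = 1/2"
    and "prob_space.indep_set M
           {\<beta> -` S \<inter> space M | S. S \<in> sets borel}
           {(\<lambda>\<omega>. restrict (\<lambda>(i,j,k). X \<omega> i j k) ({..<m} \<times> {..<m} \<times> {..<p})) -` S \<inter> space M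
              | S. S \<in> sets (PiM ({..<m} \<times> {..<m} \<times> {..<p}) (\<lambda>_. borel))}"
    and "integrable M (\<lambda>\<omega>. tTr m p (texp m p (\<lambda>i j k. A i j k + X \<omega> i j k)))"
    and "integrable M (\<lambda>\<omega>. tTr m p (texp m p
            (\<lambda>i j k. A i j k + complex_of_real (2 * \<beta> \<omega>) * X \<omega> i j k)))"
  shows "(\<integral>\<omega>. tTr m p (texp m p (\<lambda>i j k. A i j k + X \<omega> i j k)) \<partial>M)
       \<le> (\<integral>\<omega>. tTr m p (texp m p
            (\<lambda>i j k. A i j k + complex_of_real (2 * \<beta> \<omega>) * X \<omega> i j k)) \<partial>M)"
proof -
  have X_meas: "(\<lambda>\<omega>. X \<omega> i j k) \<in> borel_measurable M" if "i < m" "j < m" "k < p" for i j k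
    using assms(6) that by (auto intro: borel_measurable_integrable)
  have "(\<integral>\<^sup>+\<omega>. ennreal (tr_exp m p (tadd A (X \<omega>))) \<partial>M)
      \<le> (\<integral>\<^sup>+\<omega>. ennreal (tr_exp m p (tadd A (tscale (2 * \<beta> \<omega>) (X \<omega>)))) \<partial>M)"
    using nn_integral_tr_exp_symmetrization[OF assms(1-6)]
      nn_integral_tr_exp_rademacher[OF assms(1-3) X_meas assms(7-10)] by simp
  moreover have "0 \<le> tTr m p (texp m p (tadd A (X \<omega>)))" if "\<omega> \<in> space M" for \<omega>
    using assms(2-5) that by (intro tTr_texp_nonneg hermitian_tensor_tadd) auto
  moreover have "0 \<le> tTr m p (texp m p (tadd A (tscale (2 * \<beta> \<omega>) (X \<omega>))))" if "\<omega> \<in> space M" for \<omega>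
    using assms(2-5) that by (intro tTr_texp_nonneg hermitian_tensor_tadd hermitian_tensor_tscale) auto
  ultimately show ?thesis
    using assms(11,12) unfolding tr_exp_def tadd_def tscale_def
    by (intro integral_le_of_nn_integral_le) auto
qed

end
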